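(* Let $n\ge1$ be an integer and $\kappa\ge0$. Suppose each arc travel time function is separable, $t_a=t_a(v_a)$, and is a polynomial of degree $n$ with nonnegative coefficients. Define $$\zeta(\kappa,n)=\begin{cases}(1+\kappa)^{n+1}&\text{if }\kappa\ge(n+1)^{1/n}-1,\\[2pt] \Big(\frac1{1+\kappa}-\frac{n}{(n+1)^{(n+1)/n}}\Big)^{-1}&\text{if }0\le\kappa\le(n+1)^{1/n}-1.\end{cases}$$ Let $\mathbf f^\kappa$ be any $\kappa$-MSatUE, $\mathbf f^0$ a PRUE flow and $\mathbf f^*$ a system optimal flow. Then $$C(\mathbf f^* )\le C(\mathbf f^\kappa)\le\zeta(\kappa,n)\,C(\mathbf f^* )\le\zeta(\kappa,n)\,C(\mathbf f^0).$$ In particular, $\mathsf{PoSat}_\kappa(G,\mathbf Q,\mathbf t)\le\zeta(\kappa,n)$.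
   Context: Let $G=(\mathcal N,\mathcal A)$ be a finite directed graph and $\mathcal W$ a finite set of OD pairs; each $w$ has demand $Q_w>0$ (vector $\mathbf Q$) and a finite set $\mathcal P_w$ of paths from its origin to its destination; $\mathcal P=\bigcup_w\mathcal P_w$; $\delta^p_a=1$ if arc $a$ lies on path $p$, else $0$. Feasible path flows $\mathbf F=\{\mathbf f\ge0:\sum_{p\in\mathcal P_w}f_p=Q_w\ \forall w\}$, with induced arc flows $v_a=\sum_p\delta^p_af_p$. Path travel time $c_p(\mathbf f)=\sum_a\delta^p_at_a(\mathbf v)$; total system travel time $C(\mathbf f)=\sum_{p\in\mathcal P}c_p(\mathbf f)f_p=\sum_a t_a(\mathbf v)v_a$. A system optimal flow $\mathbf f^*$ minimizes $C$ over $\mathbf F$. A flow $\mathbf f$ is a perfectly rational user equilibrium (PRUE) if $f_p>0\implies c_p(\mathbf f)=\min_{p'\in\mathcal P_w}c_{p'}(\mathbf f)$ for all $w$, $p\in\mathcal P_w$; it is a $\kappa$-MSatUE if $f_p>0\implies c_p(\mathbf f)\le(1+\kappa)\min_{p'\in\mathcal P_w}c_{p'}(\mathbf f)$. The price of satisficing is $\mathsf{PoSat}_\kappa(G,\mathbf Q,\mathbf t)=\max_{\mathbf f^\kappa}C(\mathbf f^\kappa)/C(\mathbf f^0)$, the maximum over all $\kappa$-MSatUE flows $\mathbf f^\kappa$, with $\mathbf f^0$ a PRUE flow. *)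

theory Defs
  imports Complex_Main "HOL-Computational_Algebra.Polynomial"
begin

(* Directed graph G = (N, A): arcs of type 'a, each arc a has tail tl_arc a and head hd_arc a.
   A path from o to d is a nonempty simple path, represented by the list of its arcs. *)
definition is_path :: "'n set \<Rightarrow> 'a set \<Rightarrow> ('a \<Rightarrow> 'n) \<Rightarrow> ('a \<Rightarrow> 'n) \<Rightarrow> 'n \<Rightarrow> 'n \<Rightarrow> 'a list \<Rightarrow> bool" where
  "is_path N A tl_arc hd_arc o' d p \<longleftrightarrow>
     p \<noteq> [] \<and> set p \<subseteq> A \<and>
     tl_arc (hd p) = o' \<and> hd_arc (last p) = d \<and>
     (\<forall>i. Suc i < length p \<longrightarrow> hd_arc (p ! i) = tl_arc (p ! Suc i)) \<and>
     distinct (o' # map hd_arc p) \<and> set (o' # map hd_arc p) \<subseteq> N"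

definition all_paths :: "'w set \<Rightarrow> ('w \<Rightarrow> 'a list set) \<Rightarrow> 'a list set" where
  "all_paths W P = (\<Union>w\<in>W. P w)"

definition delta :: "'a list \<Rightarrow> 'a \<Rightarrow> real" where
  "delta p a = (if a \<in> set p then 1 else 0)"

definition feasible :: "'w set \<Rightarrow> ('w \<Rightarrow> 'a list set) \<Rightarrow> ('w \<Rightarrow> real) \<Rightarrow> ('a list \<Rightarrow> real) \<Rightarrow> bool" where
  "feasible W P Q f \<longleftrightarrow> (\<forall>p\<in>all_paths W P. 0 \<le> f p) \<and> (\<forall>w\<in>W. (\<Sum>p\<in>P w. f p) = Q w)"

definition arc_flow :: "'w set \<Rightarrow> ('w \<Rightarrow> 'a list set) \<Rightarrow> ('a list \<Rightarrow> real) \<Rightarrow> 'a \<Rightarrow> real" where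
  "arc_flow W P f a = (\<Sum>p\<in>all_paths W P. delta p a * f p)"

(* separable arc travel time t_a(v_a) = poly (tp a) v_a *)
definition path_cost :: "'a set \<Rightarrow> 'w set \<Rightarrow> ('w \<Rightarrow> 'a list set) \<Rightarrow> ('a \<Rightarrow> real poly) \<Rightarrow> ('a list \<Rightarrow> real) \<Rightarrow> 'a list \<Rightarrow> real" where
  "path_cost A W P tp f p = (\<Sum>a\<in>A. delta p a * poly (tp a) (arc_flow W P f a))"

definition total_cost :: "'a set \<Rightarrow> 'w set \<Rightarrow> ('w \<Rightarrow> 'a list set) \<Rightarrow> ('a \<Rightarrow> real poly) \<Rightarrow> ('a list \<Rightarrow> real) \<Rightarrow> real" where
  "total_cost A W P tp f = (\<Sum>a\<in>A. poly (tp a) (arc_flow W P f a) * arc_flow W P f a)"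

definition system_optimal where
  "system_optimal A W P Q tp f \<longleftrightarrow> feasible W P Q f \<and>
     (\<forall>g. feasible W P Q g \<longrightarrow> total_cost A W P tp f \<le> total_cost A W P tp g)"

definition PRUE where
  "PRUE A W P Q tp f \<longleftrightarrow> feasible W P Q f \<and>
     (\<forall>w\<in>W. \<forall>p\<in>P w. f p > 0 \<longrightarrow>
        path_cost A W P tp f p = Min (path_cost A W P tp f ` P w))"

definition MSatUE where
  "MSatUE \<kappa> A W P Q tp f \<longleftrightarrow> feasible W P Q f \<and>
     (\<forall>w\<in>W. \<forall>p\<in>P w. f p > 0 \<longrightarrow>
        path_cost A W P tp f p \<le> (1 + \<kappa>) * Min (path_cost A W P tp f ` P w))"

(* price of satisficing, relative to a given PRUE flow f0 *)
definition PoSat where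
  "PoSat \<kappa> A W P Q tp f0 =
     (SUP g\<in>{g. MSatUE \<kappa> A W P Q tp g}. total_cost A W P tp g / total_cost A W P tp f0)"

definition zeta :: "real \<Rightarrow> nat \<Rightarrow> real" where
  "zeta \<kappa> n = (if \<kappa> \<ge> (real n + 1) powr (1 / real n) - 1 then (1 + \<kappa>) ^ (n + 1)
               else inverse (1 / (1 + \<kappa>) - real n / (real n + 1) powr ((real n + 1) / real n)))"

end

theory Submission
  imports Defs
begin

(* Write c = 1 + kappa.  A kappa-MSatUE g only loads paths whose cost is within the factor c of the
   cheapest path of their OD pair, so for every feasible h the variational inequality
   C(g) <= c * sum_a t_a(v_a(g)) v_a(h) holds.  For a polynomial t of degree at most n with
   nonnegative coefficients, c t(x) y <= lam t(x) x + M t(y) y as soon as M >= c and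
   c z^n - lam z^(n+1) <= M for all z >= 0; summing over the arcs gives
   C(g) <= lam C(g) + M C(h).  Young's inequality with a parameter a provides
   lam = c n / ((n+1) a) and M = c a^n / (n+1), admissible when a^n >= n+1, and hence
   C(g) <= c a^(n+1) / ((n+1) a - c n) * C(h).  This ratio decreases in a up to a = c and
   increases afterwards, so its minimum over a >= (n+1)^(1/n) is attained at
   a = max c ((n+1)^(1/n)), where it equals zeta kappa n. *)

lemma young_power_ineq:
  fixes a z :: real
  assumes a: "a > 0" and z: "z \<ge> 0"
  shows "(real n + 1) * a * z ^ n \<le> real n * z ^ (n + 1) + a ^ (n + 1)"
proof (cases "z = 0")
  case True
  then show ?thesis using a by (cases n) auto
next
  case False
  with z have z: "z > 0" by simp
  have "1 + real (n + 1) * (a / z - 1) \<le> (1 + (a / z - 1)) ^ (n + 1)"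
    by (rule Bernoulli_inequality) (use a z in simp)
  then have "z ^ (n + 1) * (1 + real (n + 1) * (a / z - 1)) \<le> z ^ (n + 1) * (a / z) ^ (n + 1)"
    using z by (intro mult_left_mono) auto
  also have "z ^ (n + 1) * (a / z) ^ (n + 1) = a ^ (n + 1)"
    using z by (simp add: power_divide)
  also have "z ^ (n + 1) * (1 + real (n + 1) * (a / z - 1))
      = (real n + 1) * a * z ^ n - real n * z ^ (n + 1)"
    using z by (simp add: field_simps)
  finally show ?thesis by simp
qed

lemma power_gap_le_of_le_degree:
  fixes c lam M z :: real
  assumes z: "z \<ge> 0" and "k \<le> n" and c: "c \<ge> 0" and lam: "lam \<ge> 0" and "c \<le> M"
    and top: "c * z ^ n - lam * z ^ (n + 1) \<le> M"
  shows "c * z ^ k - lam * z ^ (k + 1) \<le> M"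
proof -
  have gap: "c * z ^ j - lam * z ^ (j + 1) = z ^ j * (c - lam * z)" for j
    by (simp add: algebra_simps)
  consider "c - lam * z \<le> 0" | "z \<le> 1" "c - lam * z > 0" | "z > 1" "c - lam * z > 0"
    by linarith
  then show ?thesis
  proof cases
    case 1
    then have "z ^ k * (c - lam * z) \<le> 0" using z by (simp add: mult_nonneg_nonpos)
    then show ?thesis using gap[of k] \<open>c \<le> M\<close> c by linarith
  next
    case 2
    then have "z ^ k * (c - lam * z) \<le> 1 * c"
      using z lam by (intro mult_mono) (auto simp: power_le_one)
    then show ?thesis using gap[of k] \<open>c \<le> M\<close> by simp
  next
    case 3
    then have "z ^ k * (c - lam * z) \<le> z ^ n * (c - lam * z)"
      using \<open>k \<le> n\<close> by (intro mult_right_mono) (auto simp: power_increasing)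
    then show ?thesis using gap[of k] gap[of n] top by linarith
  qed
qed

lemma mult_power_le_of_power_gap_le:
  fixes c lam M x y :: real
  assumes x: "x \<ge> 0" and y: "y \<ge> 0" and lam: "lam \<ge> 0"
    and gap: "\<And>z. z \<ge> 0 \<Longrightarrow> c * z ^ k - lam * z ^ (k + 1) \<le> M"
  shows "c * x ^ k * y \<le> lam * x ^ (k + 1) + M * y ^ (k + 1)"
proof (cases "y = 0")
  case True
  then show ?thesis using x lam by simp
next
  case False
  with y have y: "y > 0" by simp
  have "y ^ (k + 1) * (c * (x / y) ^ k - lam * (x / y) ^ (k + 1)) \<le> y ^ (k + 1) * M"
    using gap[of "x / y"] x y by (intro mult_left_mono) auto
  also have "y ^ (k + 1) * (c * (x / y) ^ k - lam * (x / y) ^ (k + 1))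
      = c * x ^ k * y - lam * x ^ (k + 1)"
    using y by (simp add: field_simps power_divide)
  finally show ?thesis by (simp add: algebra_simps)
qed

lemma poly_mult_le_of_power_gap_le:
  fixes p :: "real poly" and c lam M x y :: real
  assumes coeff: "\<forall>i. coeff p i \<ge> 0" and deg: "degree p \<le> n"
    and x: "x \<ge> 0" and y: "y \<ge> 0" and c: "c \<ge> 0" and lam: "lam \<ge> 0" and "c \<le> M"
    and gap: "\<And>z. z \<ge> 0 \<Longrightarrow> c * z ^ n - lam * z ^ (n + 1) \<le> M"
  shows "c * poly p x * y \<le> lam * (poly p x * x) + M * (poly p y * y)"
proof -
  have "c * poly p x * y = (\<Sum>i\<le>degree p. coeff p i * (c * x ^ i * y))"
    unfolding poly_altdef by (simp add: sum_distrib_left sum_distrib_right algebra_simps)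
  also have "\<dots> \<le> (\<Sum>i\<le>degree p. coeff p i * (lam * x ^ (i + 1) + M * y ^ (i + 1)))"
  proof (intro sum_mono mult_left_mono)
    fix i assume "i \<in> {..degree p}"
    with deg have "i \<le> n" by simp
    show "c * x ^ i * y \<le> lam * x ^ (i + 1) + M * y ^ (i + 1)"
      using x y lam power_gap_le_of_le_degree[OF _ \<open>i \<le> n\<close> c lam \<open>c \<le> M\<close> gap]
      by (rule mult_power_le_of_power_gap_le)
  qed (use coeff in auto)
  also have "\<dots> = lam * (poly p x * x) + M * (poly p y * y)"
    unfolding poly_altdef
    by (simp add: sum_distrib_left sum_distrib_right algebra_simps sum.distrib)
  finally show ?thesis .
qed

lemma power_gap_le_young:
  fixes a c z :: real
  assumes a: "a > 0" and c: "c \<ge> 0" and z: "z \<ge> 0"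
  shows "c * z ^ n - c * real n / ((real n + 1) * a) * z ^ (n + 1) \<le> c * a ^ n / (real n + 1)"
proof -
  have pos: "(real n + 1) * a > 0" using a by simp
  have "c * ((real n + 1) * a * z ^ n) \<le> c * (real n * z ^ (n + 1) + a ^ (n + 1))"
    using young_power_ineq[OF a z] c by (rule mult_left_mono)
  then have "c * ((real n + 1) * a * z ^ n) / ((real n + 1) * a)
      \<le> c * (real n * z ^ (n + 1) + a ^ (n + 1)) / ((real n + 1) * a)"
    using pos by (intro divide_right_mono) auto
  also have "c * ((real n + 1) * a * z ^ n) / ((real n + 1) * a) = c * z ^ n"
    using a by simp
  also have "c * (real n * z ^ (n + 1) + a ^ (n + 1)) / ((real n + 1) * a)
      = c * real n / ((real n + 1) * a) * z ^ (n + 1) + c * a ^ n / (real n + 1)"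
    using a by (simp add: divide_simps) (simp add: algebra_simps)
  finally show ?thesis by simp
qed

lemma young_denominator_pos:
  fixes a c :: real
  assumes "a > 0" and "c \<le> a"
  shows "(real n + 1) * a - c * real n > 0"
proof -
  have "c * real n \<le> a * real n" using \<open>c \<le> a\<close> by (intro mult_right_mono) auto
  then show ?thesis using \<open>a > 0\<close> by (simp add: algebra_simps)
qed

lemma zeta_eq_young_ratio:
  assumes "n \<ge> 1" and "\<kappa> \<ge> 0"
    and a_def: "a = max (1 + \<kappa>) ((real n + 1) powr (1 / real n))"
  shows "zeta \<kappa> n = (1 + \<kappa>) * a ^ (n + 1) / ((real n + 1) * a - (1 + \<kappa>) * real n)"
proof -
  define r where "r = (real n + 1) powr (1 / real n)"
  have "r > 0" unfolding r_def by simp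
  have r_pow: "r ^ n = real n + 1"
    using \<open>n \<ge> 1\<close> unfolding r_def by (simp add: root_powr_inverse[symmetric])
  have "(real n + 1) powr ((real n + 1) / real n) = (real n + 1) powr (1 + 1 / real n)"
    using \<open>n \<ge> 1\<close> by (simp add: field_simps)
  then have r_succ: "(real n + 1) powr ((real n + 1) / real n) = (real n + 1) * r"
    unfolding r_def by (simp add: powr_add)
  show ?thesis
  proof (cases "\<kappa> \<ge> r - 1")
    case True
    then have "a = 1 + \<kappa>" unfolding a_def r_def by simp
    moreover have "(real n + 1) * (1 + \<kappa>) - (1 + \<kappa>) * real n = 1 + \<kappa>"
      by (simp add: algebra_simps)
    ultimately show ?thesis
      using True \<open>\<kappa> \<ge> 0\<close> unfolding zeta_def r_def[symmetric] by simp
  next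
    case False
    then have "a = r" unfolding a_def r_def by simp
    have denom: "(real n + 1) * r - (1 + \<kappa>) * real n > 0"
      using \<open>r > 0\<close> False by (intro young_denominator_pos) auto
    have inverse_eq: "inverse (1 / (1 + \<kappa>) - real n / ((real n + 1) * r))
        = (1 + \<kappa>) * ((real n + 1) * r) / ((real n + 1) * r - (1 + \<kappa>) * real n)"
    proof -
      have "inverse (1 / c - m / d) = c * d / (d - c * m)" if "c > 0" "d > 0" "d - c * m > 0"
        for c d m :: real
        using that by (simp add: field_simps)
      then show ?thesis using denom \<open>r > 0\<close> \<open>\<kappa> \<ge> 0\<close> by simp
    qed
    have "r ^ (n + 1) = (real n + 1) * r"
      using r_pow by (simp add: mult.commute)
    then show ?thesis
      using False \<open>a = r\<close> inverse_eq r_pow unfolding zeta_def r_def[symmetric] r_succ by simp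
  qed
qed

lemma zeta_pos:
  assumes "n \<ge> 1" and "\<kappa> \<ge> 0"
  shows "zeta \<kappa> n > 0"
proof -
  define a where "a = max (1 + \<kappa>) ((real n + 1) powr (1 / real n))"
  have "1 + \<kappa> \<le> a" and "a > 0" using \<open>\<kappa> \<ge> 0\<close> unfolding a_def by auto
  then have "(real n + 1) * a - (1 + \<kappa>) * real n > 0" by (intro young_denominator_pos)
  then show ?thesis
    using zeta_eq_young_ratio[OF assms a_def] \<open>a > 0\<close> \<open>\<kappa> \<ge> 0\<close> by simp
qed

lemma sum_mult_le_of_near_minimal:
  fixes g h c :: "'p \<Rightarrow> real" and K :: real
  assumes "finite S" and g: "\<forall>p\<in>S. g p \<ge> 0" and h: "\<forall>p\<in>S. h p \<ge> 0"
    and same_total: "sum g S = sum h S" and "K \<ge> 0"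
    and near_min: "\<forall>p\<in>S. g p > 0 \<longrightarrow> c p \<le> K * Min (c ` S)"
  shows "(\<Sum>p\<in>S. g p * c p) \<le> K * (\<Sum>p\<in>S. h p * c p)"
proof -
  let ?m = "Min (c ` S)"
  have "(\<Sum>p\<in>S. g p * c p) \<le> (\<Sum>p\<in>S. g p * (K * ?m))"
  proof (rule sum_mono)
    fix p assume "p \<in> S"
    then show "g p * c p \<le> g p * (K * ?m)"
      using g near_min by (cases "g p > 0") (auto intro: mult_left_mono)
  qed
  also have "\<dots> = sum h S * (K * ?m)"
    using same_total by (simp add: sum_distrib_right[symmetric])
  also have "\<dots> = K * (\<Sum>p\<in>S. h p * ?m)"
    by (simp add: sum_distrib_left sum_distrib_right algebra_simps)
  also have "\<dots> \<le> K * (\<Sum>p\<in>S. h p * c p)"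
    using h \<open>finite S\<close> \<open>K \<ge> 0\<close> by (intro mult_left_mono sum_mono) auto
  finally show ?thesis .
qed

lemma od_paths_disjoint:
  assumes "\<forall>w\<in>W. \<forall>p\<in>P w. is_path N A tl_arc hd_arc (fst w) (snd w) p"
  shows "\<forall>w\<in>W. \<forall>w'\<in>W. w \<noteq> w' \<longrightarrow> P w \<inter> P w' = {}"
proof (intro ballI impI)
  fix w w' assume "w \<in> W" "w' \<in> W" "w \<noteq> w'"
  have "fst w = fst w' \<and> snd w = snd w'" if "p \<in> P w" "p \<in> P w'" for p
    using assms \<open>w \<in> W\<close> \<open>w' \<in> W\<close> that unfolding is_path_def by metis
  then show "P w \<inter> P w' = {}"
    using \<open>w \<noteq> w'\<close> by (auto simp: prod_eq_iff)
qed

lemma arc_flow_nonneg: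
  assumes "feasible W P Q f"
  shows "arc_flow W P f a \<ge> 0"
  using assms unfolding arc_flow_def feasible_def delta_def by (intro sum_nonneg) auto

lemma total_cost_nonneg:
  assumes "feasible W P Q f" and "\<forall>a\<in>A. \<forall>i. coeff (tp a) i \<ge> 0"
  shows "total_cost A W P tp f \<ge> 0"
  unfolding total_cost_def poly_altdef
  using assms arc_flow_nonneg[OF assms(1)] by (intro sum_nonneg mult_nonneg_nonneg) auto

lemma sum_arc_cost_eq_sum_path_cost:
  assumes "finite A" and "finite (all_paths W P)"
  shows "(\<Sum>a\<in>A. poly (tp a) (arc_flow W P f a) * arc_flow W P h a)
       = (\<Sum>p\<in>all_paths W P. h p * path_cost A W P tp f p)"
  using assms unfolding arc_flow_def[of W P h] path_cost_def
  by (simp add: sum_distrib_left sum_distrib_right algebra_simps sum.swap[of _ A])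

lemma MSatUE_variational_inequality:
  assumes "finite A" and "finite W" and fin_P: "\<forall>w\<in>W. finite (P w)"
    and disj: "\<forall>w\<in>W. \<forall>w'\<in>W. w \<noteq> w' \<longrightarrow> P w \<inter> P w' = {}"
    and "\<kappa> \<ge> 0" and g: "MSatUE \<kappa> A W P Q tp g" and h: "feasible W P Q h"
  shows "total_cost A W P tp g
       \<le> (1 + \<kappa>) * (\<Sum>a\<in>A. poly (tp a) (arc_flow W P g a) * arc_flow W P h a)"
proof -
  let ?c = "path_cost A W P tp g"
  have "finite (all_paths W P)"
    unfolding all_paths_def using \<open>finite W\<close> fin_P by auto
  note arc_to_path = sum_arc_cost_eq_sum_path_cost[OF \<open>finite A\<close> this]
  have by_od: "(\<Sum>p\<in>all_paths W P. u p) = (\<Sum>w\<in>W. \<Sum>p\<in>P w. u p)" for u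
    unfolding all_paths_def by (rule sum.UNION_disjoint[OF \<open>finite W\<close> fin_P disj])
  have "(\<Sum>p\<in>P w. g p * ?c p) \<le> (1 + \<kappa>) * (\<Sum>p\<in>P w. h p * ?c p)" if "w \<in> W" for w
  proof (rule sum_mult_le_of_near_minimal)
    have "P w \<subseteq> all_paths W P" using that unfolding all_paths_def by auto
    then show "\<forall>p\<in>P w. g p \<ge> 0" "\<forall>p\<in>P w. h p \<ge> 0" "sum g (P w) = sum h (P w)"
      using g h that unfolding MSatUE_def feasible_def by auto
    show "\<forall>p\<in>P w. g p > 0 \<longrightarrow> ?c p \<le> (1 + \<kappa>) * Min (?c ` P w)"
      using g that unfolding MSatUE_def by auto
  qed (use fin_P that \<open>\<kappa> \<ge> 0\<close> in auto)
  then have "(\<Sum>w\<in>W. \<Sum>p\<in>P w. g p * ?c p) \<le> (\<Sum>w\<in>W. (1 + \<kappa>) * (\<Sum>p\<in>P w. h p * ?c p))"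
    by (rule sum_mono)
  then show ?thesis
    unfolding total_cost_def arc_to_path by_od sum_distrib_left .
qed

lemma MSatUE_total_cost_le_mix:
  fixes lam M :: real
  assumes "finite A" and "finite W" and "\<forall>w\<in>W. finite (P w)"
    and "\<forall>w\<in>W. \<forall>w'\<in>W. w \<noteq> w' \<longrightarrow> P w \<inter> P w' = {}"
    and arcs: "\<forall>a\<in>A. degree (tp a) \<le> n \<and> (\<forall>i. coeff (tp a) i \<ge> 0)"
    and "\<kappa> \<ge> 0" and g: "MSatUE \<kappa> A W P Q tp g" and h: "feasible W P Q h"
    and "lam \<ge> 0" and "1 + \<kappa> \<le> M"
    and gap: "\<And>z. z \<ge> 0 \<Longrightarrow> (1 + \<kappa>) * z ^ n - lam * z ^ (n + 1) \<le> M"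
  shows "total_cost A W P tp g \<le> lam * total_cost A W P tp g + M * total_cost A W P tp h"
proof -
  have "feasible W P Q g" using g unfolding MSatUE_def by simp
  have "total_cost A W P tp g
      \<le> (\<Sum>a\<in>A. (1 + \<kappa>) * poly (tp a) (arc_flow W P g a) * arc_flow W P h a)"
    using MSatUE_variational_inequality[OF assms(1-4,6-8)] by (simp add: sum_distrib_left mult.assoc)
  also have "\<dots> \<le> (\<Sum>a\<in>A. lam * (poly (tp a) (arc_flow W P g a) * arc_flow W P g a)
                    + M * (poly (tp a) (arc_flow W P h a) * arc_flow W P h a))"
    using arcs arc_flow_nonneg[OF \<open>feasible W P Q g\<close>] arc_flow_nonneg[OF h] \<open>\<kappa> \<ge> 0\<close>
    by (intro sum_mono poly_mult_le_of_power_gap_le[OF _ _ _ _ _ \<open>lam \<ge> 0\<close> \<open>1 + \<kappa> \<le> M\<close> gap]) auto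
  also have "\<dots> = lam * total_cost A W P tp g + M * total_cost A W P tp h"
    unfolding total_cost_def by (simp add: sum.distrib sum_distrib_left)
  finally show ?thesis .
qed

lemma MSatUE_total_cost_le_young_ratio:
  fixes a :: real
  assumes "finite A" and "finite W" and "\<forall>w\<in>W. finite (P w)"
    and "\<forall>w\<in>W. \<forall>w'\<in>W. w \<noteq> w' \<longrightarrow> P w \<inter> P w' = {}"
    and "\<forall>a\<in>A. degree (tp a) \<le> n \<and> (\<forall>i. coeff (tp a) i \<ge> 0)"
    and "\<kappa> \<ge> 0" and "MSatUE \<kappa> A W P Q tp g" and "feasible W P Q h"
    and a: "1 + \<kappa> \<le> a" and a_pow: "real n + 1 \<le> a ^ n"
  shows "total_cost A W P tp g
       \<le> (1 + \<kappa>) * a ^ (n + 1) / ((real n + 1) * a - (1 + \<kappa>) * real n) * total_cost A W P tp h"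
proof -
  let ?c = "1 + \<kappa>" and ?C = "total_cost A W P tp g" and ?D = "total_cost A W P tp h"
  have "a > 0" using a \<open>\<kappa> \<ge> 0\<close> by simp
  have "?c * (real n + 1) \<le> ?c * a ^ n"
    using a_pow \<open>\<kappa> \<ge> 0\<close> by (intro mult_left_mono) auto
  then have "?c \<le> ?c * a ^ n / (real n + 1)" by (simp add: field_simps)
  then have mix: "?C \<le> ?c * real n / ((real n + 1) * a) * ?C + ?c * a ^ n / (real n + 1) * ?D"
    using \<open>a > 0\<close> \<open>\<kappa> \<ge> 0\<close>
    by (intro MSatUE_total_cost_le_mix[OF assms(1-8)] power_gap_le_young) auto
  have denom: "(real n + 1) * a - ?c * real n > 0"
    using \<open>a > 0\<close> a by (rule young_denominator_pos)
  have "(real n + 1) * a * ?C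
      \<le> (real n + 1) * a * (?c * real n / ((real n + 1) * a) * ?C + ?c * a ^ n / (real n + 1) * ?D)"
    using mix \<open>a > 0\<close> by (intro mult_left_mono) auto
  also have "\<dots> = ?c * real n * ?C + ?c * a ^ (n + 1) * ?D"
    using \<open>a > 0\<close> by (simp add: distrib_left)
  finally have "((real n + 1) * a - ?c * real n) * ?C \<le> ?c * a ^ (n + 1) * ?D"
    by (simp add: algebra_simps)
  then show ?thesis
    using denom by (simp add: pos_le_divide_eq mult.commute)
qed

lemma MSatUE_total_cost_le_zeta:
  assumes "finite A" and "finite W" and "\<forall>w\<in>W. finite (P w)"
    and "\<forall>w\<in>W. \<forall>w'\<in>W. w \<noteq> w' \<longrightarrow> P w \<inter> P w' = {}"
    and "\<forall>a\<in>A. degree (tp a) \<le> n \<and> (\<forall>i. coeff (tp a) i \<ge> 0)"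
    and "n \<ge> 1" and "\<kappa> \<ge> 0" and "MSatUE \<kappa> A W P Q tp g" and "feasible W P Q h"
  shows "total_cost A W P tp g \<le> zeta \<kappa> n * total_cost A W P tp h"
proof -
  define r where "r = (real n + 1) powr (1 / real n)"
  define a where "a = max (1 + \<kappa>) r"
  have "real n + 1 = r ^ n"
    using \<open>n \<ge> 1\<close> unfolding r_def by (simp add: root_powr_inverse[symmetric])
  also have "\<dots> \<le> a ^ n"
    unfolding a_def r_def by (intro power_mono) auto
  finally have "real n + 1 \<le> a ^ n" .
  then show ?thesis
    using MSatUE_total_cost_le_young_ratio[OF assms(1-5,7-9)]
      zeta_eq_young_ratio[OF \<open>n \<ge> 1\<close> \<open>\<kappa> \<ge> 0\<close>] a_def r_def
    by simp
qed

lemma PoSat_le: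
  assumes "\<exists>g. MSatUE \<kappa> A W P Q tp g" and "total_cost A W P tp f0 \<ge> 0" and "B \<ge> 0"
    and "\<And>g. MSatUE \<kappa> A W P Q tp g \<Longrightarrow> total_cost A W P tp g \<le> B * total_cost A W P tp f0"
  shows "PoSat \<kappa> A W P Q tp f0 \<le> B"
  unfolding PoSat_def
proof (rule cSUP_least)
  show "{g. MSatUE \<kappa> A W P Q tp g} \<noteq> {}" using assms(1) by blast
  fix g assume "g \<in> {g. MSatUE \<kappa> A W P Q tp g}"
  then show "total_cost A W P tp g / total_cost A W P tp f0 \<le> B"
    using assms(2-4) by (cases "total_cost A W P tp f0 = 0") (auto simp: divide_le_eq)
qed

theorem lemma5:
  fixes N :: "'n set" and A :: "'a set" and tl_arc hd_arc :: "'a \<Rightarrow> 'n"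
    and W :: "('n \<times> 'n) set" and Q :: "'n \<times> 'n \<Rightarrow> real" and P :: "'n \<times> 'n \<Rightarrow> 'a list set"
    and tp :: "'a \<Rightarrow> real poly" and n :: nat and \<kappa> :: real
    and fk f0 fs :: "'a list \<Rightarrow> real"
  assumes "finite N" and "finite A"
    and "\<forall>a\<in>A. tl_arc a \<in> N \<and> hd_arc a \<in> N"
    and "finite W" and "W \<subseteq> N \<times> N" and "\<forall>w\<in>W. fst w \<noteq> snd w"
    and "\<forall>w\<in>W. Q w > 0"
    and "\<forall>w\<in>W. finite (P w) \<and> (\<forall>p\<in>P w. is_path N A tl_arc hd_arc (fst w) (snd w) p)"
    and "n \<ge> 1" and "\<kappa> \<ge> 0"
    and "\<forall>a\<in>A. degree (tp a) = n \<and> (\<forall>i. coeff (tp a) i \<ge> 0)"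
    and "MSatUE \<kappa> A W P Q tp fk"
    and "PRUE A W P Q tp f0"
    and "system_optimal A W P Q tp fs"
  shows "total_cost A W P tp fs \<le> total_cost A W P tp fk
       \<and> total_cost A W P tp fk \<le> zeta \<kappa> n * total_cost A W P tp fs
       \<and> zeta \<kappa> n * total_cost A W P tp fs \<le> zeta \<kappa> n * total_cost A W P tp f0
       \<and> PoSat \<kappa> A W P Q tp f0 \<le> zeta \<kappa> n"
proof -
  have paths: "\<forall>w\<in>W. finite (P w)" "\<forall>w\<in>W. \<forall>p\<in>P w. is_path N A tl_arc hd_arc (fst w) (snd w) p"
    using assms(8) by auto
  have arcs: "\<forall>a\<in>A. degree (tp a) \<le> n \<and> (\<forall>i. coeff (tp a) i \<ge> 0)"
    using assms(11) by simp
  have fs: "feasible W P Q fs"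
    and fs_min: "\<And>h. feasible W P Q h \<Longrightarrow> total_cost A W P tp fs \<le> total_cost A W P tp h"
    using assms(14) unfolding system_optimal_def by auto
  have f0: "feasible W P Q f0" using assms(13) unfolding PRUE_def by simp
  have fk: "feasible W P Q fk" using assms(12) unfolding MSatUE_def by simp
  have bound: "total_cost A W P tp g \<le> zeta \<kappa> n * total_cost A W P tp fs"
    if "MSatUE \<kappa> A W P Q tp g" for g
    using MSatUE_total_cost_le_zeta[OF assms(2,4) paths(1) od_paths_disjoint[OF paths(2)]
        arcs assms(9,10) that fs] .
  have zeta: "zeta \<kappa> n > 0" using assms(9,10) by (rule zeta_pos)
  have opt_le_f0: "zeta \<kappa> n * total_cost A W P tp fs \<le> zeta \<kappa> n * total_cost A W P tp f0"
    using fs_min[OF f0] zeta by simp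
  have "PoSat \<kappa> A W P Q tp f0 \<le> zeta \<kappa> n"
  proof (rule PoSat_le)
    show "\<exists>g. MSatUE \<kappa> A W P Q tp g" using assms(12) by blast
    show "total_cost A W P tp f0 \<ge> 0" using arcs by (intro total_cost_nonneg[OF f0]) auto
    show "zeta \<kappa> n \<ge> 0" using zeta by simp
    show "total_cost A W P tp g \<le> zeta \<kappa> n * total_cost A W P tp f0"
      if "MSatUE \<kappa> A W P Q tp g" for g
      using bound[OF that] opt_le_f0 by linarith
  qed
  then show ?thesis
    using fs_min[OF fk] bound[OF assms(12)] opt_le_f0 by blast
qed

end
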